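(* Let $\mathbf{f}$ be a simple problem. Then for every subproblem $\mathbf{g}\subseteq\mathbf{f}$, $X^*(\mathbf{g})\subseteq X^*(\mathbf{f})$.
   Context: A problem is a finite set $\mathbf{f}=\{f_1,\dots,f_m\}$ of functions $f_i:\mathbb{R}^n\to\mathbb{R}$ together with a feasible region $X\subseteq\mathbb{R}^n$, to be minimized simultaneously. A subproblem $\mathbf{g}\subseteq\mathbf{f}$ is a subset of these functions (including $\emptyset$ and $\mathbf{f}$), with the same $X$; its evaluation map is $x\mapsto(f_i(x))_{f_i\in\mathbf{g}}\in\mathbb{R}^{|\mathbf{g}|}$. For $x,y\in X$, $x$ $\mathbf{g}$-dominates $y$ if $f_i(x)\le f_i(y)$ for all $f_i\in\mathbf{g}$ and $f_j(x)<f_j(y)$ for some $f_j\in\mathbf{g}$. The Pareto set $X^*(\mathbf{g})$ is the set of $x^*\in X$ not $\mathbf{g}$-dominated by any $x\in X$; by convention $X^*(\emptyset)=\emptyset$. A problem $\mathbf{f}$ is simple if every subproblem $\mathbf{g}\subseteq\mathbf{f}$ with $k=|\mathbf{g}|$ objectives satisfies: (S1) $X^*(\mathbf{g})$ is homeomorphic to $\Delta^{k-1}=\{t\in[0,1]^k:\sum t_i=1\}$ (with $\Delta^{-1}=\emptyset$); (S2) the evaluation map of $\mathbf{g}$ restricted to $X^*(\mathbf{g})$ is a topological embedding into $\mathbb{R}^k$. All sets carry the subspace topology from Euclidean space. *)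

theory Defs
  imports "HOL-Analysis.Analysis"
begin

text \<open>Objectives are real-valued functions on R^n (modelled as real^'n).
  A problem is a finite set F of such functions with feasible region X;
  a subproblem is any subset G of F.\<close>

definition dominates :: "((real^'n::finite) \<Rightarrow> real) set \<Rightarrow> real^'n \<Rightarrow> real^'n \<Rightarrow> bool"
  where "dominates G x y \<longleftrightarrow> (\<forall>g\<in>G. g x \<le> g y) \<and> (\<exists>g\<in>G. g x < g y)"

definition pareto_set :: "(real^'n::finite) set \<Rightarrow> ((real^'n) \<Rightarrow> real) set \<Rightarrow> (real^'n) set"
  where "pareto_set X G = (if G = {} then {} else {x \<in> X. \<not> (\<exists>y\<in>X. dominates G y x)})"

text \<open>Evaluation map of G into R^G (= R^|G|), realised as functions G -> real,
  extended by 0 outside G; the codomain carries the product topology.\<close>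
definition eval_map :: "((real^'n::finite) \<Rightarrow> real) set \<Rightarrow> real^'n \<Rightarrow> (((real^'n) \<Rightarrow> real) \<Rightarrow> real)"
  where "eval_map G x = (\<lambda>h. if h \<in> G then h x else 0)"

definition std_simplex :: "((real^'n::finite) \<Rightarrow> real) set \<Rightarrow> (((real^'n) \<Rightarrow> real) \<Rightarrow> real) set"
  where "std_simplex G = {t. (\<forall>h. h \<notin> G \<longrightarrow> t h = 0) \<and> (\<forall>h\<in>G. 0 \<le> t h) \<and> sum t G = 1}"

definition simple_problem :: "(real^'n::finite) set \<Rightarrow> ((real^'n) \<Rightarrow> real) set \<Rightarrow> bool"
  where "simple_problem X F \<longleftrightarrow> finite F \<and>
    (\<forall>G \<subseteq> F. pareto_set X G homeomorphic std_simplex G \<and>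
       (\<exists>e'. homeomorphism (pareto_set X G) (eval_map G ` pareto_set X G) (eval_map G) e'))"

end

theory Submission
  imports Defs
begin

text \<open>Only condition (S2) is needed, and only through injectivity. If x is
  G-Pareto but F-dominated by y, then y cannot improve on x in any objective of G
  without G-dominating x, so y ties x on G. A point tying a G-Pareto point on G is
  itself G-Pareto, so injectivity of the evaluation map of G on its Pareto set
  forces y = x, contradicting strict domination.\<close>

lemma dominates_irrefl: "\<not> dominates G x x"
  by (auto simp: dominates_def)

lemma dominates_subset_ties:
  assumes "dominates F y x" and "G \<subseteq> F" and "\<not> dominates G y x"
  shows "\<forall>g\<in>G. g y = g x"
  using assms by (force simp: dominates_def)

lemma dominates_cong_right:
  assumes "\<forall>g\<in>G. g y = g x"
  shows "dominates G z y \<longleftrightarrow> dominates G z x"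
  using assms unfolding dominates_def by (metis (no_types, lifting))

lemma pareto_set_tie:
  assumes "x \<in> pareto_set X G" and "y \<in> X" and "\<forall>g\<in>G. g y = g x"
  shows "y \<in> pareto_set X G"
proof -
  have "G \<noteq> {}" and "\<not> (\<exists>z\<in>X. dominates G z x)"
    using assms(1) by (auto simp: pareto_set_def split: if_splits)
  then show ?thesis
    using assms(2) dominates_cong_right[OF assms(3)] by (simp add: pareto_set_def)
qed

lemma eval_map_eqI:
  assumes "\<forall>g\<in>G. g y = g x"
  shows "eval_map G y = eval_map G x"
  using assms by (auto simp: eval_map_def)

lemma pareto_set_mono_objectives:
  assumes inj: "inj_on (eval_map G) (pareto_set X G)" and "G \<subseteq> F"
  shows "pareto_set X G \<subseteq> pareto_set X F"
proof
  fix x assume x: "x \<in> pareto_set X G"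
  then have "G \<noteq> {}" and "x \<in> X" and G_opt: "\<not> (\<exists>y\<in>X. dominates G y x)"
    by (auto simp: pareto_set_def split: if_splits)
  show "x \<in> pareto_set X F"
  proof (rule ccontr)
    assume "x \<notin> pareto_set X F"
    moreover have "F \<noteq> {}"
      using \<open>G \<noteq> {}\<close> \<open>G \<subseteq> F\<close> by blast
    ultimately obtain y where "y \<in> X" and dom: "dominates F y x"
      using \<open>x \<in> X\<close> by (auto simp: pareto_set_def)
    have "\<not> dominates G y x"
      using G_opt \<open>y \<in> X\<close> by blast
    with dom \<open>G \<subseteq> F\<close> have tie: "\<forall>g\<in>G. g y = g x"
      by (rule dominates_subset_ties)
    have "eval_map G y = eval_map G x"
      using tie by (rule eval_map_eqI)
    moreover have "y \<in> pareto_set X G"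
      using x \<open>y \<in> X\<close> tie by (rule pareto_set_tie)
    ultimately have "y = x"
      using inj x by (auto dest: inj_onD)
    with dom show False
      by (simp add: dominates_irrefl)
  qed
qed

lemma simple_problem_eval_map_inj_on:
  assumes "simple_problem X F" and "G \<subseteq> F"
  shows "inj_on (eval_map G) (pareto_set X G)"
proof -
  have "\<exists>e'. homeomorphism (pareto_set X G) (eval_map G ` pareto_set X G) (eval_map G) e'"
    using assms unfolding simple_problem_def by simp
  then obtain e' where hom: "homeomorphism (pareto_set X G) (eval_map G ` pareto_set X G) (eval_map G) e'" ..
  have "e' (eval_map G x) = x" if "x \<in> pareto_set X G" for x
    using hom that by (rule homeomorphism_apply1)
  then show ?thesis
    by (rule inj_on_inverseI[where g = e'])
qed

theorem proposition3:
  fixes X :: "(real^'n::finite) set" and F G :: "((real^'n) \<Rightarrow> real) set"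
  assumes "simple_problem X F" and "G \<subseteq> F"
  shows "pareto_set X G \<subseteq> pareto_set X F"
  by (rule pareto_set_mono_objectives[OF simple_problem_eval_map_inj_on[OF assms] assms(2)])

end
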